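(* Let $(y_1,y_2,q)\in\widetilde{\mathbb G}_3$ with $|y_2|\le|y_1|$. Then $$\frac{|3y_2-3\bar y_1q|+|y_1y_2-9q|}{9-|y_1|^2}\le\frac{|3y_1-3\bar y_2q|+|y_1y_2-9q|}{9-|y_2|^2}.$$
   Context: $\mathbb D$ is the open unit disc. $\widetilde{\mathbb G}_3=\{(\beta_1+\bar\beta_2q,\ \beta_2+\bar\beta_1q,\ q): q\in\mathbb D,\ \beta_1,\beta_2\in\mathbb C,\ |\beta_1|+|\beta_2|<3\}$. *)

theory Defs
  imports "HOL-Analysis.Analysis"
begin

definition G3tilde :: "(complex \<times> complex \<times> complex) set" where
  "G3tilde = {(\<beta>1 + cnj \<beta>2 * q, \<beta>2 + cnj \<beta>1 * q, q) | \<beta>1 \<beta>2 q.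
                 q \<in> ball 0 1 \<and> norm \<beta>1 + norm \<beta>2 < 3}"

end

theory Submission
  imports Defs
begin

text \<open>Write \<open>y\<^sub>1 = \<beta>\<^sub>1 + \<bar>\<beta>\<^sub>2 q\<close>, \<open>y\<^sub>2 = \<beta>\<^sub>2 + \<bar>\<beta>\<^sub>1 q\<close> and put
  \<open>s = |\<beta>\<^sub>1|\<close>, \<open>t = |\<beta>\<^sub>2|\<close>, \<open>D = 1 - |q|\<^sup>2\<close>.
  Then \<open>|3y\<^sub>1 - 3\<bar>y\<^sub>2q| = 3Ds\<close>, \<open>|3y\<^sub>2 - 3\<bar>y\<^sub>1q| = 3Dt\<close>, and
  \<open>|y\<^sub>2| \<le> |y\<^sub>1|\<close> amounts to \<open>t \<le> s\<close>. Moreover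
  \<open>y\<^sub>1y\<^sub>2 - 9q = p + \<bar>p q\<^sup>2 - m q\<close> with \<open>p = \<beta>\<^sub>1\<beta>\<^sub>2\<close> and \<open>m = 9 - s\<^sup>2 - t\<^sup>2\<close>, whose modulus
  is at most \<open>M = m - stD - 2 Re (p \<bar>q)\<close>. After clearing denominators the difference
  of the two sides factors as \<open>D (s - t) (3M - (s + t) |y\<^sub>1y\<^sub>2 - 9q|)\<close>, which is
  nonnegative because \<open>s + t < 3\<close>.\<close>

lemma norm_power2_add_cnj_mult:
  fixes a b q :: complex
  shows "(cmod (a + cnj b * q))\<^sup>2 = (cmod a)\<^sup>2 + (cmod b)\<^sup>2 * (cmod q)\<^sup>2 + 2 * Re (a * b * cnj q)"
  unfolding cmod_power2 by (simp add: algebra_simps power2_eq_square)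

lemma add_cnj_mult_diff_eq:
  fixes a b q :: complex
  shows "(a + cnj b * q) - cnj (b + cnj a * q) * q = of_real (1 - (cmod q)\<^sup>2) * a"
proof -
  have "cnj q * q = of_real ((cmod q)\<^sup>2)"
    by (metis complex_norm_square mult.commute of_real_power)
  then show ?thesis by (simp add: algebra_simps)
qed

lemma norm_scaled_add_cnj_mult_diff:
  fixes k a b q :: complex
  assumes "cmod q \<le> 1"
  shows "cmod (k * (a + cnj b * q) - k * cnj (b + cnj a * q) * q) = cmod k * (1 - (cmod q)\<^sup>2) * cmod a"
proof -
  have "k * (a + cnj b * q) - k * cnj (b + cnj a * q) * q = k * ((a + cnj b * q) - cnj (b + cnj a * q) * q)"
    by (simp add: algebra_simps)
  also have "\<dots> = k * of_real (1 - (cmod q)\<^sup>2) * a"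
    by (simp only: add_cnj_mult_diff_eq mult.assoc)
  moreover have "\<bar>1 - (cmod q)\<^sup>2\<bar> = 1 - (cmod q)\<^sup>2"
    using assms by (simp add: abs_square_le_1)
  ultimately show ?thesis
    by (simp only: norm_mult norm_of_real)
qed

lemma add_cnj_mult_prod_eq:
  fixes a b q :: complex and c :: real
  shows "(a + cnj b * q) * (b + cnj a * q) - of_real c * q
         = a * b + cnj (a * b) * q\<^sup>2 - of_real (c - (cmod a)\<^sup>2 - (cmod b)\<^sup>2) * q"
proof -
  have "a * cnj a = of_real ((cmod a)\<^sup>2)" "b * cnj b = of_real ((cmod b)\<^sup>2)"
    by (metis complex_norm_square of_real_power)+
  moreover have "(a + cnj b * q) * (b + cnj a * q) - of_real c * q
      = a * b + cnj (a * b) * q\<^sup>2 - (of_real c - a * cnj a - b * cnj b) * q"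
    by (simp add: algebra_simps power2_eq_square)
  ultimately show ?thesis by simp
qed

lemma norm_power2_add_cnj_mult_power2:
  fixes p q :: complex and m :: real
  shows "(cmod (p + cnj p * q\<^sup>2 - of_real m * q))\<^sup>2 =
     (m - cmod p * (1 - (cmod q)\<^sup>2) - 2 * Re (p * cnj q))\<^sup>2
     - (1 - (cmod q)\<^sup>2) * (m - 2 * cmod p) * (m - 2 * Re (p * cnj q))"
proof -
  have "cmod p * cmod p = Re p * Re p + Im p * Im p"
    by (metis cmod_power2 power2_eq_square)
  then show ?thesis
    unfolding cmod_power2 by (simp add: algebra_simps power2_eq_square)
qed

lemma norm_add_cnj_mult_power2_le:
  fixes p q :: complex and m :: real
  assumes "cmod q \<le> 1" and "2 * cmod p \<le> m"
  shows "cmod (p + cnj p * q\<^sup>2 - of_real m * q)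
         \<le> m - cmod p * (1 - (cmod q)\<^sup>2) - 2 * Re (p * cnj q)"
proof -
  define D where "D = 1 - (cmod q)\<^sup>2"
  define c where "c = 2 * Re (p * cnj q)"
  have D: "0 \<le> D" using assms(1) unfolding D_def by (simp add: abs_square_le_1)
  have cq: "c \<le> 2 * cmod p * cmod q"
    using complex_Re_le_cmod[of "p * cnj q"] unfolding c_def by (simp add: norm_mult)
  also have "\<dots> \<le> 2 * cmod p"
    using assms(1) by (simp add: mult_left_le)
  finally have c: "c \<le> 2 * cmod p" .
  have "D + 2 * cmod q \<le> 2"
    using sum_power2_ge_zero[of "cmod q - 1" 0] unfolding D_def by (simp add: power2_eq_square algebra_simps)
  then have "cmod p * (D + 2 * cmod q) \<le> cmod p * 2"
    by (simp add: mult_left_mono)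
  then have "cmod p * D + c \<le> 2 * cmod p"
    using cq by (simp add: algebra_simps)
  then have M: "0 \<le> m - cmod p * D - c" using assms(2) by linarith
  have "(cmod (p + cnj p * q\<^sup>2 - of_real m * q))\<^sup>2 \<le> (m - cmod p * D - c)\<^sup>2"
    using norm_power2_add_cnj_mult_power2[of p q m] D assms(2) c
    unfolding D_def[symmetric] c_def[symmetric] by simp
  then show ?thesis
    using M unfolding D_def c_def by (simp add: power2_le_iff_abs_le)
qed

lemma norm_add_cnj_mult_prod_le:
  fixes a b q :: complex
  assumes "cmod q \<le> 1" and "cmod a + cmod b \<le> 3"
  shows "cmod ((a + cnj b * q) * (b + cnj a * q) - 9 * q)
         \<le> 9 - (cmod a)\<^sup>2 - (cmod b)\<^sup>2 - cmod a * cmod b * (1 - (cmod q)\<^sup>2) - 2 * Re (a * b * cnj q)"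
proof -
  have "(cmod a + cmod b)\<^sup>2 \<le> 3\<^sup>2" using assms(2) by (intro power_mono) auto
  then have "2 * cmod (a * b) \<le> 9 - (cmod a)\<^sup>2 - (cmod b)\<^sup>2"
    by (simp add: norm_mult power2_eq_square algebra_simps)
  from norm_add_cnj_mult_power2_le[OF assms(1) this]
  show ?thesis using add_cnj_mult_prod_eq[of a b q 9] by (simp add: norm_mult)
qed

lemma ratio_inequality_real:
  fixes s t r c K :: real
  defines "D \<equiv> 1 - r\<^sup>2"
  assumes st: "0 \<le> s" "0 \<le> t" "s + t < 3" and r: "0 \<le> r" "r < 1"
    and c: "c \<le> 2 * s * t * r"
    and le: "t\<^sup>2 + s\<^sup>2 * r\<^sup>2 \<le> s\<^sup>2 + t\<^sup>2 * r\<^sup>2"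
    and K: "0 \<le> K" "K \<le> 9 - s\<^sup>2 - t\<^sup>2 - s * t * D - c"
  shows "(3 * D * t + K) / (9 - (s\<^sup>2 + t\<^sup>2 * r\<^sup>2 + c))
         \<le> (3 * D * s + K) / (9 - (t\<^sup>2 + s\<^sup>2 * r\<^sup>2 + c))"
proof -
  define A where "A = 9 - (s\<^sup>2 + t\<^sup>2 * r\<^sup>2 + c)"
  define B where "B = 9 - (t\<^sup>2 + s\<^sup>2 * r\<^sup>2 + c)"
  define M where "M = 9 - s\<^sup>2 - t\<^sup>2 - s * t * D - c"
  have D: "0 < D" using r unfolding D_def by (simp add: abs_square_less_1)
  have BA: "B - A = (s\<^sup>2 - t\<^sup>2) * D" unfolding A_def B_def D_def by (simp add: algebra_simps)
  have "0 \<le> (s\<^sup>2 - t\<^sup>2) * D" using BA le unfolding A_def B_def by linarith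
  then have "t\<^sup>2 \<le> s\<^sup>2" using D by (simp add: zero_le_mult_iff)
  then have ts: "t \<le> s" using st by (simp add: power2_le_iff_abs_le)
  have "t * r \<le> t" using st r by (simp add: mult_left_le)
  then have "(s + t * r)\<^sup>2 < 3\<^sup>2" using st r by (intro power_strict_mono) auto
  then have A: "0 < A" using c unfolding A_def by (simp add: power2_eq_square algebra_simps)
  have B: "0 < B" using A BA \<open>0 \<le> (s\<^sup>2 - t\<^sup>2) * D\<close> by linarith
  have "K * (s + t) \<le> M * 3" using st K unfolding M_def by (intro mult_mono) auto
  then have "0 \<le> D * (s - t) * (3 * M - K * (s + t))" using D ts by simp
  also have "\<dots> = (3 * D * s + K) * A - (3 * D * t + K) * B"
    unfolding A_def B_def M_def D_def by (simp add: algebra_simps power2_eq_square)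
  finally show ?thesis
    using A B unfolding A_def[symmetric] B_def[symmetric] by (simp add: divide_simps)
qed

theorem mainTheorem15:
  fixes y1 y2 q :: complex
  assumes "(y1, y2, q) \<in> G3tilde"
    and "norm y2 \<le> norm y1"
  shows "(norm (3 * y2 - 3 * cnj y1 * q) + norm (y1 * y2 - 9 * q)) / (9 - (norm y1)\<^sup>2)
         \<le> (norm (3 * y1 - 3 * cnj y2 * q) + norm (y1 * y2 - 9 * q)) / (9 - (norm y2)\<^sup>2)"
proof -
  obtain b1 b2 where y1: "y1 = b1 + cnj b2 * q" and y2: "y2 = b2 + cnj b1 * q"
    and q: "cmod q < 1" and b: "cmod b1 + cmod b2 < 3"
    using assms(1) unfolding G3tilde_def by auto
  have n: "norm (3 * y1 - 3 * cnj y2 * q) = 3 * (1 - (cmod q)\<^sup>2) * cmod b1"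
      "norm (3 * y2 - 3 * cnj y1 * q) = 3 * (1 - (cmod q)\<^sup>2) * cmod b2"
    using norm_scaled_add_cnj_mult_diff[of q 3 b1 b2] norm_scaled_add_cnj_mult_diff[of q 3 b2 b1] q
    unfolding y1 y2 by simp_all
  have ny: "(cmod y1)\<^sup>2 = (cmod b1)\<^sup>2 + (cmod b2)\<^sup>2 * (cmod q)\<^sup>2 + 2 * Re (b1 * b2 * cnj q)"
      "(cmod y2)\<^sup>2 = (cmod b2)\<^sup>2 + (cmod b1)\<^sup>2 * (cmod q)\<^sup>2 + 2 * Re (b1 * b2 * cnj q)"
    unfolding y1 y2 norm_power2_add_cnj_mult by (simp_all add: mult.commute)
  have "Re (b1 * b2 * cnj q) \<le> cmod b1 * cmod b2 * cmod q"
    using complex_Re_le_cmod[of "b1 * b2 * cnj q"] by (simp add: norm_mult)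
  moreover have "(cmod y2)\<^sup>2 \<le> (cmod y1)\<^sup>2" using assms(2) by (simp add: power_mono)
  moreover have "norm (y1 * y2 - 9 * q) \<le> 9 - (cmod b1)\<^sup>2 - (cmod b2)\<^sup>2
      - cmod b1 * cmod b2 * (1 - (cmod q)\<^sup>2) - 2 * Re (b1 * b2 * cnj q)"
    unfolding y1 y2 using q b by (intro norm_add_cnj_mult_prod_le) auto
  ultimately show ?thesis
    unfolding n ny using b q by (intro ratio_inequality_real) (auto simp: ny)
qed

end
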